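(* Let $p=5$. The function $n\mapsto F(n)/\omega(3)^n$ extends to an analytic function on $\mathbb{Z}_5$, namely $$x\mapsto \frac{2}{\sqrt5}\sinh_5\!\left(x\log_5\frac{\phi}{\omega(3)}\right);$$ that is, this series converges for all $x\in\mathbb{Z}_5$ and at every integer $n\ge0$ it equals $F(n)/\omega(3)^n$.
   Context: $F(n)$ is the Fibonacci sequence ($F(0)=0,F(1)=1,F(n+2)=F(n+1)+F(n)$). $K=\mathbb{Q}_5(\phi)$ with $\phi$ a root of $x^2-x-1$ and $\sqrt5:=2\phi-1$; $\pi=\sqrt5$ is a uniformizer and the residue field of $\mathcal O_K$ has $5$ elements. $\omega(3)$ is the unique $4$th root of unity in $\mathcal O_K$ congruent to $3$ modulo $\sqrt5$ (equivalently, the $4$th root of unity in $\mathbb{Z}_5$ congruent to $3$ mod $5$). $\log_5 y=\sum_{m\ge1}(-1)^{m+1}(y-1)^m/m$ is the $5$-adic logarithm, $\exp_5 y=\sum_{m\ge0}y^m/m!$, and $\sinh_5(y)=\frac{\exp_5(y)-\exp_5(-y)}{2}=\sum_{m\ge0}\frac{y^{2m+1}}{(2m+1)!}$. *)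

theory Defs
  imports Complex_Main "HOL-Number_Theory.Fib"
begin

text \<open>The field K = Q_5(phi) is characterised (up to isometric isomorphism) as a field
  of characteristic 0 with an absolute value nrm that is non-archimedean, satisfies
  nrm 5 = 1/5 (so it restricts to the 5-adic absolute value on Q), is complete, and in which
  the elements of Q(phi) are dense, where phi^2 = phi + 1.\<close>

definition Kconv :: "('k::field_char_0 \<Rightarrow> real) \<Rightarrow> (nat \<Rightarrow> 'k) \<Rightarrow> 'k \<Rightarrow> bool" where
  "Kconv nrm s l \<longleftrightarrow> (\<forall>e>0. \<exists>N. \<forall>n\<ge>N. nrm (s n - l) < e)"

definition Kcauchy :: "('k::field_char_0 \<Rightarrow> real) \<Rightarrow> (nat \<Rightarrow> 'k) \<Rightarrow> bool" where
  "Kcauchy nrm s \<longleftrightarrow> (\<forall>e>0. \<exists>N. \<forall>m\<ge>N. \<forall>n\<ge>N. nrm (s m - s n) < e)"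

definition Ksums :: "('k::field_char_0 \<Rightarrow> real) \<Rightarrow> (nat \<Rightarrow> 'k) \<Rightarrow> 'k \<Rightarrow> bool" where
  "Ksums nrm f l \<longleftrightarrow> Kconv nrm (\<lambda>M. \<Sum>m<M. f m) l"

definition is_K5 :: "('k::field_char_0 \<Rightarrow> real) \<Rightarrow> 'k \<Rightarrow> bool" where
  "is_K5 nrm phi \<longleftrightarrow>
     (\<forall>x. nrm x \<ge> 0) \<and> (\<forall>x. nrm x = 0 \<longleftrightarrow> x = 0) \<and>
     (\<forall>x y. nrm (x * y) = nrm x * nrm y) \<and>
     (\<forall>x y. nrm (x + y) \<le> max (nrm x) (nrm y)) \<and>
     nrm 5 = 1 / 5 \<and>
     (\<forall>s. Kcauchy nrm s \<longrightarrow> (\<exists>l. Kconv nrm s l)) \<and>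
     phi ^ 2 = phi + 1 \<and>
     (\<forall>y. \<exists>a b :: nat \<Rightarrow> rat. Kconv nrm (\<lambda>n. of_rat (a n) + of_rat (b n) * phi) y)"

definition Z5 :: "('k::field_char_0 \<Rightarrow> real) \<Rightarrow> 'k set" where
  "Z5 nrm = {x. \<exists>s :: nat \<Rightarrow> int. Kconv nrm (\<lambda>n. of_int (s n)) x}"

text \<open>omega(3): the 4th root of unity congruent to 3 modulo sqrt 5 (i.e. nrm (w - 3) < 1).\<close>
definition omega3 :: "('k::field_char_0 \<Rightarrow> real) \<Rightarrow> 'k" where
  "omega3 nrm = (THE w. w ^ 4 = 1 \<and> nrm (w - 3) < 1)"

definition log_term :: "'k::field_char_0 \<Rightarrow> nat \<Rightarrow> 'k" where
  "log_term y m = (- 1) ^ (Suc m + 1) * (y - 1) ^ Suc m / of_nat (Suc m)"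

definition log5 :: "('k::field_char_0 \<Rightarrow> real) \<Rightarrow> 'k \<Rightarrow> 'k" where
  "log5 nrm y = (THE l. Ksums nrm (log_term y) l)"

definition sinh_term :: "'k::field_char_0 \<Rightarrow> nat \<Rightarrow> 'k" where
  "sinh_term y m = y ^ (2 * m + 1) / fact (2 * m + 1)"

definition sinh5 :: "('k::field_char_0 \<Rightarrow> real) \<Rightarrow> 'k \<Rightarrow> 'k" where
  "sinh5 nrm y = (THE l. Ksums nrm (sinh_term y) l)"

end

theory Submission
  imports Defs "HOL-Computational_Algebra.Polynomial_FPS"
begin

text \<open>In the 5-adic absolute value \<open>|k!| \<ge> 5\<^sup>-\<^sup>k\<^sup>/\<^sup>4\<close>, so the exponential series converges for
  \<open>|w| \<le> 5\<^sup>-\<^sup>1\<^sup>/\<^sup>2\<close>, and for \<open>|y - 1| \<le> 5\<^sup>-\<^sup>1\<^sup>/\<^sup>2\<close> the logarithm series converges with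
  \<open>|log y| \<le> 5\<^sup>-\<^sup>1\<^sup>/\<^sup>2\<close>. For \<open>|c| \<le> 1\<close> the formal binomial series
  \<open>(1 + X)\<^sup>c = exp (c ln (1 + X))\<close> has \<open>j\<close>-th coefficient of size at most \<open>5\<^sup>j\<^sup>/\<^sup>4\<close>, so it can be
  evaluated at \<open>y - 1\<close>, evaluation is multiplicative, and comparing polynomial truncations of the
  composition shows that the value is \<open>exp (c log y)\<close>. From \<open>(1 + X)\<^sup>n (1 + X)\<^sup>-\<^sup>n = 1\<close> one gets
  \<open>exp (\<plusminus>n log y) = y\<^sup>\<plusminus>\<^sup>n\<close>, hence \<open>sinh (n log y) = (y\<^sup>n - y\<^sup>-\<^sup>n) / 2\<close>.
  For \<open>y = \<phi> / \<omega>\<close> we have \<open>|y - 1| \<le> 5\<^sup>-\<^sup>1\<^sup>/\<^sup>2\<close> (both \<open>2\<phi>\<close> and \<open>2\<omega>\<close> are \<open>\<equiv> 1\<close> modulo \<open>\<surd>5\<close>)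
  and \<open>y\<^sup>-\<^sup>1 = (1 - \<phi>) / \<omega>\<close> since \<open>\<omega>\<^sup>2 = -1 = \<phi> (1 - \<phi>)\<close>; Binet's formula
  \<open>F(n) \<surd>5 = \<phi>\<^sup>n - (1 - \<phi>)\<^sup>n\<close> finishes the proof.\<close>

unbundle fps_syntax

section \<open>Non-archimedean absolute values\<close>

locale nonarch_abs =
  fixes nrm :: "'k::field_char_0 \<Rightarrow> real"
  assumes nrm_nonneg [simp]: "nrm x \<ge> 0"
    and nrm_eq_0_iff [simp]: "nrm x = 0 \<longleftrightarrow> x = 0"
    and nrm_mult: "nrm (x * y) = nrm x * nrm y"
    and nrm_add_le_max: "nrm (x + y) \<le> max (nrm x) (nrm y)"
begin

lemma nrm_0 [simp]: "nrm 0 = 0"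
  by simp

lemma nrm_1 [simp]: "nrm 1 = 1"
  using nrm_mult[of 1 1] nrm_eq_0_iff[of 1] by (metis mult_cancel_right1 one_neq_zero)

lemma nrm_minus [simp]: "nrm (- x) = nrm x"
proof -
  have "nrm (-1) ^ 2 = 1 ^ 2"
    using nrm_mult[of "-1" "-1"] by (simp add: power2_eq_square)
  hence "nrm (-1) = 1"
    by (rule power2_eq_imp_eq) simp_all
  thus ?thesis using nrm_mult[of "-1" x] by simp
qed

lemma nrm_diff_commute: "nrm (x - y) = nrm (y - x)"
  using nrm_minus[of "x - y"] by simp

lemma nrm_power [simp]: "nrm (x ^ n) = nrm x ^ n"
  by (induct n) (simp_all add: nrm_mult)

lemma nrm_divide: "nrm (x / y) = nrm x / nrm y"
proof (cases "y = 0")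
  case False
  have "nrm (x / y) * nrm y = nrm x"
    using False by (simp flip: nrm_mult)
  thus ?thesis using False by (simp add: field_simps)
qed simp

lemma nrm_diff_le_max: "nrm (x - y) \<le> max (nrm x) (nrm y)"
  using nrm_add_le_max[of x "- y"] by simp

lemma nrm_triangle: "nrm (x + y) \<le> nrm x + nrm y"
  using nrm_add_le_max[of x y] nrm_nonneg[of x] nrm_nonneg[of y] by linarith

lemma nrm_add_le: "nrm x \<le> B \<Longrightarrow> nrm y \<le> B \<Longrightarrow> nrm (x + y) \<le> B"
  using nrm_add_le_max[of x y] by simp

lemma nrm_diff_le: "nrm x \<le> B \<Longrightarrow> nrm y \<le> B \<Longrightarrow> nrm (x - y) \<le> B"
  using nrm_diff_le_max[of x y] by simp

lemma nrm_sum_le: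
  "finite S \<Longrightarrow> B \<ge> 0 \<Longrightarrow> (\<And>i. i \<in> S \<Longrightarrow> nrm (f i) \<le> B) \<Longrightarrow> nrm (sum f S) \<le> B"
  by (induct S rule: finite_induct) (auto intro!: nrm_add_le)

lemma nrm_add_eq_left: "nrm y < nrm x \<Longrightarrow> nrm (x + y) = nrm x"
  using nrm_add_le_max[of x y] nrm_add_le_max[of "x + y" "- y"] by auto

lemma nrm_of_nat_le_1: "nrm (of_nat n) \<le> 1"
  by (induct n) (auto intro!: nrm_add_le)

lemma nrm_of_int_le_1: "nrm (of_int n) \<le> 1"
proof (cases "n \<ge> 0")
  case False
  hence "(of_int n :: 'k) = - of_nat (nat (- n))" by simp
  thus ?thesis using nrm_of_nat_le_1 by simp
qed (use nrm_of_nat_le_1[of "nat n"] in simp)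

lemma nrm_telescope_le:
  assumes "n \<le> m" "B \<ge> 0" "\<And>i. n \<le> i \<Longrightarrow> i < m \<Longrightarrow> nrm (s (Suc i) - s i) \<le> B"
  shows "nrm (s m - s n) \<le> B"
  using assms
proof (induct m rule: dec_induct)
  case (step m)
  have "s (Suc m) - s n = (s (Suc m) - s m) + (s m - s n)" by simp
  thus ?case using step by (metis le_less_Suc_eq less_Suc_eq nrm_add_le order.refl)
qed simp

end

context nonarch_abs
begin

lemma Kconv_iff_tendsto: "Kconv nrm s l \<longleftrightarrow> (\<lambda>n. nrm (s n - l)) \<longlonglongrightarrow> 0"
  unfolding Kconv_def LIMSEQ_iff by simp

lemma Kconv_by_bound:
  assumes "eventually (\<lambda>n. nrm (s n - l) \<le> b n) sequentially" "b \<longlonglongrightarrow> 0"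
  shows "Kconv nrm s l"
  unfolding Kconv_iff_tendsto
  by (rule real_tendsto_sandwich[of "\<lambda>n. 0" _ _ b]) (use assms in auto)

lemma Kconv_unique:
  assumes "Kconv nrm s a" "Kconv nrm s b"
  shows "a = b"
proof -
  have "nrm (a - b) \<le> nrm (s n - b) + nrm (s n - a)" for n
    using nrm_triangle[of "s n - b" "a - s n"] nrm_diff_commute[of a "s n"] by simp
  moreover have "(\<lambda>n. nrm (s n - b) + nrm (s n - a)) \<longlonglongrightarrow> 0"
    using assms unfolding Kconv_iff_tendsto by (intro tendsto_add_zero)
  ultimately have "nrm (a - b) \<le> 0"
    by (intro tendsto_lowerbound[of _ 0 sequentially]) (auto intro: always_eventually)
  thus ?thesis using nrm_nonneg[of "a - b"] by simp
qed

lemma Ksums_unique: "Ksums nrm f a \<Longrightarrow> Ksums nrm f b \<Longrightarrow> a = b"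
  unfolding Ksums_def by (rule Kconv_unique)

lemma The_Ksums: "Ksums nrm f l \<Longrightarrow> (THE l. Ksums nrm f l) = l"
  using Ksums_unique by blast

lemma Kconv_const: "Kconv nrm (\<lambda>n. c) c"
  unfolding Kconv_iff_tendsto by simp

lemma Kconv_eventually_const: "eventually (\<lambda>n. s n = c) sequentially \<Longrightarrow> Kconv nrm s c"
  by (rule Kconv_by_bound[of _ _ "\<lambda>_. 0"]) (auto elim: eventually_mono)

lemma Kconv_add:
  assumes "Kconv nrm s a" "Kconv nrm t b"
  shows "Kconv nrm (\<lambda>n. s n + t n) (a + b)"
proof (rule Kconv_by_bound)
  show "\<forall>\<^sub>F n in sequentially. nrm (s n + t n - (a + b)) \<le> nrm (s n - a) + nrm (t n - b)"
    using nrm_triangle by (intro always_eventually) (simp add: add_diff_add)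
  show "(\<lambda>n. nrm (s n - a) + nrm (t n - b)) \<longlonglongrightarrow> 0"
    using assms unfolding Kconv_iff_tendsto by (rule tendsto_add_zero)
qed

lemma Kconv_minus: "Kconv nrm s a \<Longrightarrow> Kconv nrm (\<lambda>n. - s n) (- a)"
  unfolding Kconv_iff_tendsto using nrm_minus[of "s _ - a"] by simp

lemma Kconv_diff:
  "Kconv nrm s a \<Longrightarrow> Kconv nrm t b \<Longrightarrow> Kconv nrm (\<lambda>n. s n - t n) (a - b)"
  using Kconv_add[OF _ Kconv_minus, of s a t b] by simp

lemma Kconv_mult:
  assumes "Kconv nrm s a" "Kconv nrm t b"
  shows "Kconv nrm (\<lambda>n. s n * t n) (a * b)"
proof (rule Kconv_by_bound)
  have "nrm (s n * t n - a * b)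
      \<le> nrm (s n - a) * nrm (t n - b) + nrm (s n - a) * nrm b + nrm a * nrm (t n - b)" for n
  proof -
    have "s n * t n - a * b = (s n - a) * (t n - b) + (s n - a) * b + a * (t n - b)"
      by (simp add: algebra_simps)
    thus ?thesis
      using nrm_triangle[of "(s n - a) * (t n - b) + (s n - a) * b" "a * (t n - b)"]
        nrm_triangle[of "(s n - a) * (t n - b)" "(s n - a) * b"] by (simp add: nrm_mult)
  qed
  thus "\<forall>\<^sub>F n in sequentially. nrm (s n * t n - a * b)
      \<le> nrm (s n - a) * nrm (t n - b) + nrm (s n - a) * nrm b + nrm a * nrm (t n - b)"
    by (rule always_eventually[OF allI])
  have "(\<lambda>n. nrm (s n - a)) \<longlonglongrightarrow> 0" "(\<lambda>n. nrm (t n - b)) \<longlonglongrightarrow> 0"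
    using assms unfolding Kconv_iff_tendsto by auto
  from tendsto_add[OF tendsto_add[OF tendsto_mult[OF this] tendsto_mult_left_zero[OF this(1)]]
      tendsto_mult_right_zero[OF this(2)]]
  show "(\<lambda>n. nrm (s n - a) * nrm (t n - b) + nrm (s n - a) * nrm b + nrm a * nrm (t n - b))
      \<longlonglongrightarrow> 0"
    by simp
qed

lemma Kconv_power: "Kconv nrm s a \<Longrightarrow> Kconv nrm (\<lambda>n. s n ^ k) (a ^ k)"
  by (induct k) (simp_all add: Kconv_const Kconv_mult)

lemma Kconv_cong_tendsto:
  assumes "Kconv nrm s a" "(\<lambda>n. nrm (t n - s n)) \<longlonglongrightarrow> 0"
  shows "Kconv nrm t a"
proof (rule Kconv_by_bound)
  show "\<forall>\<^sub>F n in sequentially. nrm (t n - a) \<le> nrm (t n - s n) + nrm (s n - a)"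
    using nrm_triangle[of "t n - s n" "s n - a" for n] by (intro always_eventually) simp
  show "(\<lambda>n. nrm (t n - s n) + nrm (s n - a)) \<longlonglongrightarrow> 0"
    using assms unfolding Kconv_iff_tendsto by (simp add: tendsto_add_zero)
qed

lemma Kconv_subseq: "Kconv nrm s a \<Longrightarrow> strict_mono r \<Longrightarrow> Kconv nrm (\<lambda>n. s (r n)) a"
  unfolding Kconv_iff_tendsto using LIMSEQ_subseq_LIMSEQ by (fastforce simp: o_def)

lemma Kconv_nrm_le:
  assumes "Kconv nrm s l" "\<And>n. nrm (s n) \<le> B"
  shows "nrm l \<le> B"
proof -
  have "nrm l \<le> nrm (s n - l) + B" for n
    using nrm_triangle[of "s n" "l - s n"] nrm_diff_commute[of l "s n"] assms(2)[of n] by simp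
  hence "nrm l \<le> 0 + B"
    using assms(1) unfolding Kconv_iff_tendsto
    by (intro tendsto_lowerbound[OF tendsto_add[OF _ tendsto_const]]) (auto intro: always_eventually)
  thus ?thesis by simp
qed

end

locale complete_nonarch_abs = nonarch_abs +
  assumes Kcauchy_imp_Kconv: "Kcauchy nrm s \<Longrightarrow> \<exists>l. Kconv nrm s l"
begin

lemma Kconv_exists_if_steps_tendsto_0:
  assumes "(\<lambda>n. nrm (s (Suc n) - s n)) \<longlonglongrightarrow> 0"
  shows "\<exists>l. Kconv nrm s l"
proof (rule Kcauchy_imp_Kconv, unfold Kcauchy_def, intro allI impI)
  fix e :: real
  assume "e > 0"
  then obtain N where "\<forall>i\<ge>N. \<bar>nrm (s (Suc i) - s i)\<bar> < e / 2"
    using assms unfolding LIMSEQ_iff by (metis half_gt_zero real_norm_def diff_zero)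
  hence N: "nrm (s (Suc i) - s i) \<le> e / 2" if "i \<ge> N" for i
    using that by fastforce
  have lt: "nrm (s m - s n) < e" if "N \<le> n" "n \<le> m" for m n
  proof -
    have "nrm (s m - s n) \<le> e / 2"
      using \<open>e > 0\<close> N that(1) by (intro nrm_telescope_le[OF that(2)]) simp_all
    thus ?thesis using \<open>e > 0\<close> by linarith
  qed
  have "nrm (s m - s n) < e" if "N \<le> n" "N \<le> m" for m n
  proof (cases "n \<le> m")
    case False
    hence "m \<le> n" by simp
    thus ?thesis using lt[OF that(2)] nrm_diff_commute[of "s m" "s n"] by simp
  qed (use lt that in simp)
  thus "\<exists>N. \<forall>m\<ge>N. \<forall>n\<ge>N. nrm (s m - s n) < e"
    by blast
qed

lemma Ksums_exists_if_tendsto_0: "(\<lambda>n. nrm (f n)) \<longlonglongrightarrow> 0 \<Longrightarrow> \<exists>l. Ksums nrm f l"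
  unfolding Ksums_def by (rule Kconv_exists_if_steps_tendsto_0) simp

end

section \<open>Absolute values extending the 5-adic one\<close>

text \<open>\<open>theta\<close> is \<open>5\<^sup>-\<^sup>1\<^sup>/\<^sup>4\<close>: since \<open>v\<^sub>5(k!) \<le> k/4\<close>, every factorial satisfies \<open>|k!| \<ge> theta\<^sup>k\<close>, and
  all radii of convergence below are powers of \<open>theta\<close>.\<close>

definition theta :: real where
  "theta = root 4 (1/5)"

lemma theta_pos: "theta > 0"
  by (simp add: theta_def)

lemma theta_less_1: "theta < 1"
  by (simp add: theta_def)

lemma theta_pow_4: "theta ^ 4 = 1/5"
  unfolding theta_def by (simp add: real_root_pow_pos2)

lemma theta_pow_antimono: "m \<le> n \<Longrightarrow> theta ^ n \<le> theta ^ m"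
  using theta_pos theta_less_1 by (intro power_decreasing) auto

lemma theta_pow_tendsto_0: "(\<lambda>n. theta ^ n) \<longlonglongrightarrow> 0"
  using theta_pos theta_less_1 by (intro LIMSEQ_power_zero) simp

locale abs5 = nonarch_abs nrm for nrm :: "'k::field_char_0 \<Rightarrow> real" +
  assumes nrm_5: "nrm 5 = 1/5"
begin

lemma nrm_of_int_eq_1:
  assumes "\<not> 5 dvd u"
  shows "nrm (of_int u) = 1"
proof -
  have "coprime 5 u"
    using assms by (intro prime_imp_coprime) auto
  then obtain a b where ab: "a * 5 + b * u = 1"
    using bezout_int[of 5 u] by auto
  have "1 = nrm (of_int a * 5 + of_int b * of_int u :: 'k)"
    using arg_cong[OF ab, of "\<lambda>x. nrm (of_int x :: 'k)"] by simp
  also have "\<dots> \<le> max (nrm (of_int a :: 'k) / 5) (nrm (of_int b :: 'k) * nrm (of_int u :: 'k))"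
    using nrm_add_le_max[of "of_int a * 5" "of_int b * of_int u"] by (simp add: nrm_mult nrm_5)
  finally have "1 \<le> nrm (of_int b :: 'k) * nrm (of_int u :: 'k)"
    using nrm_of_int_le_1[of a] by auto
  also have "\<dots> \<le> nrm (of_int u :: 'k)"
    using nrm_of_int_le_1[of b] by (simp add: mult_left_le_one_le)
  finally show ?thesis
    using nrm_of_int_le_1[of u] by simp
qed

lemma nrm_of_nat_eq_1:
  assumes "\<not> 5 dvd u"
  shows "nrm (of_nat u) = 1"
proof -
  have "\<not> 5 dvd int u"
    using assms by presburger
  thus ?thesis using nrm_of_int_eq_1 by fastforce
qed

lemma nrm_2 [simp]: "nrm 2 = 1"
  and nrm_3 [simp]: "nrm 3 = 1"
  and nrm_4 [simp]: "nrm 4 = 1"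
  and nrm_6 [simp]: "nrm 6 = 1"
  using nrm_of_nat_eq_1[of 2] nrm_of_nat_eq_1[of 3] nrm_of_nat_eq_1[of 4] nrm_of_nat_eq_1[of 6]
  by simp_all

lemma nrm_of_int_le_if_pow5_dvd: "5 ^ k dvd x \<Longrightarrow> nrm (of_int x) \<le> (1/5) ^ k"
  using nrm_of_int_le_1 by (auto simp: nrm_mult nrm_5 mult_left_le_one_le)

lemma nrm_of_nat_ge: "m \<ge> 1 \<Longrightarrow> theta ^ (m - 1) \<le> nrm (of_nat m)"
proof (induct m rule: less_induct)
  case (less m)
  show ?case
  proof (cases "5 dvd m")
    case False
    thus ?thesis
      using nrm_of_nat_eq_1 theta_pow_antimono[of 0 "m - 1"] by simp
  next
    case True
    then obtain j where j: "m = 5 * j" "1 \<le> j" "j < m"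
      using less.prems by auto
    have "theta ^ (m - 1) \<le> theta ^ (4 + (j - 1))"
      using j by (intro theta_pow_antimono) simp
    also have "\<dots> = theta ^ 4 * theta ^ (j - 1)"
      by (rule power_add)
    also have "\<dots> \<le> nrm (5 * of_nat j)"
      using less.hyps[OF j(3,2)] theta_pos by (simp add: nrm_mult nrm_5 theta_pow_4)
    finally show ?thesis
      using j by simp
  qed
qed

lemma nrm_fact_5_mult_add: "r < 5 \<Longrightarrow> nrm (fact (5 * j + r) :: 'k) = nrm (fact (5 * j) :: 'k)"
proof (induct r)
  case (Suc r)
  have "\<not> 5 dvd Suc (5 * j + r)"
    using Suc.prems by presburger
  thus ?case
    using Suc nrm_of_nat_eq_1 by (simp add: nrm_mult del: of_nat_Suc)
qed simp

lemma nrm_fact_5_mult: "nrm (fact (5 * j) :: 'k) = theta ^ (4 * j) * nrm (fact j :: 'k)"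
proof (induct j)
  case (Suc j)
  have "5 * Suc j = Suc (5 * j + 4)"
    by simp
  hence "fact (5 * Suc j) = (of_nat (Suc (5 * j + 4)) :: 'k) * fact (5 * j + 4)"
    by (simp only: fact_Suc)
  also have "(of_nat (Suc (5 * j + 4)) :: 'k) = 5 * of_nat (Suc j)"
    by simp
  finally have "fact (5 * Suc j) = (5 * of_nat (Suc j) :: 'k) * fact (5 * j + 4)" .
  thus ?case
    using Suc nrm_fact_5_mult_add[of 4 j]
    by (simp add: nrm_mult nrm_5 theta_pow_4 power_add algebra_simps del: of_nat_Suc)
qed simp

lemma nrm_fact_ge: "theta ^ k \<le> nrm (fact k :: 'k)"
proof (induct k rule: less_induct)
  case (less k)
  show ?case
  proof (cases "k = 0")
    case False
    define j where "j = k div 5"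
    have k: "k = 5 * j + k mod 5" "k mod 5 < 5" "j < k"
      using False unfolding j_def by auto
    have "theta ^ k \<le> theta ^ (4 * j + j)"
      using k by (intro theta_pow_antimono) linarith
    also have "\<dots> = theta ^ (4 * j) * theta ^ j"
      by (rule power_add)
    also have "\<dots> \<le> theta ^ (4 * j) * nrm (fact j :: 'k)"
      using less.hyps[OF k(3)] theta_pos by (simp add: mult_left_mono)
    also have "\<dots> = nrm (fact k :: 'k)"
      using nrm_fact_5_mult_add[OF k(2), of j] nrm_fact_5_mult[of j] k(1) by simp
    finally show ?thesis .
  qed simp
qed

end

section \<open>Formal power series with coefficients of size at most \<open>theta\<^sup>-\<^sup>j\<close>\<close>

text \<open>The binomial series \<open>(1 + X)\<^sup>c\<close>, written as \<open>exp (c ln (1 + X))\<close> so that its coefficients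
  can be estimated from those of \<open>exp\<close> and \<open>ln\<close>.\<close>

definition fps_cpow :: "'a::field_char_0 \<Rightarrow> 'a fps" where
  "fps_cpow c = fps_exp c oo fps_ln 1"

lemma fps_cpow_add: "fps_cpow (c + d) = fps_cpow c * fps_cpow d"
  unfolding fps_cpow_def fps_exp_add_mult by (rule fps_compose_mult_distrib) simp

lemma fps_cpow_0 [simp]: "fps_cpow 0 = 1"
  by (simp add: fps_cpow_def)

lemma fps_cpow_1: "fps_cpow 1 = 1 + fps_X"
proof -
  have "fps_ln 1 = fps_inv (fps_exp (1::'a) - 1)"
    by (rule fps_ln_fps_exp_inv) simp
  hence "(fps_exp 1 - 1) oo fps_ln 1 = (fps_X :: 'a fps)"
    using fps_inv_right[of "fps_exp (1::'a) - 1"] by simp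
  thus ?thesis
    unfolding fps_cpow_def by (simp add: fps_compose_sub_distrib algebra_simps)
qed

lemma fps_cpow_nth:
  "fps_cpow c $ j = (\<Sum>i=0..j. c ^ i / of_nat (fact i) * (fps_ln 1 ^ i) $ j)"
  unfolding fps_cpow_def fps_compose_nth by simp

lemma fps_ln_power_nth_eq_0: "j < k \<Longrightarrow> (fps_ln c ^ k) $ j = 0"
proof -
  assume "j < k"
  obtain B where "fps_ln c = fps_X * B"
    using fps_X_dvd_fps_ln by (metis dvdE)
  hence "fps_ln c ^ k = fps_X ^ k * B ^ k"
    by (simp add: power_mult_distrib)
  thus ?thesis using \<open>j < k\<close> by (simp add: fps_X_power_mult_nth)
qed

context abs5
begin

definition coeff_bounded :: "'k fps \<Rightarrow> real \<Rightarrow> bool" where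
  "coeff_bounded F B \<longleftrightarrow> (\<forall>j. nrm (F $ j) \<le> B / theta ^ j)"

lemma coeff_boundedD: "coeff_bounded F B \<Longrightarrow> nrm (F $ j) \<le> B / theta ^ j"
  unfolding coeff_bounded_def by blast

lemma coeff_boundedI: "(\<And>j. nrm (F $ j) \<le> B / theta ^ j) \<Longrightarrow> coeff_bounded F B"
  unfolding coeff_bounded_def by blast

lemma coeff_bounded_one: "coeff_bounded 1 1"
  unfolding coeff_bounded_def using theta_pos theta_pow_antimono[of 0] by (simp add: field_simps)

lemma coeff_bounded_mult:
  assumes "coeff_bounded F A" "coeff_bounded G B" "A \<ge> 0" "B \<ge> 0"
  shows "coeff_bounded (F * G) (A * B)"
proof (rule coeff_boundedI)
  fix n
  have "nrm (F $ i * G $ (n - i)) \<le> A * B / theta ^ n" if "i \<le> n" for i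
  proof -
    have "nrm (F $ i * G $ (n - i)) \<le> (A / theta ^ i) * (B / theta ^ (n - i))"
      unfolding nrm_mult using assms theta_pos by (intro mult_mono coeff_boundedD) auto
    also have "\<dots> = A * B / theta ^ n"
      using that by (simp flip: power_add)
    finally show ?thesis .
  qed
  thus "nrm ((F * G) $ n) \<le> A * B / theta ^ n"
    unfolding fps_mult_nth using assms theta_pos by (intro nrm_sum_le) auto
qed

lemma coeff_bounded_power: "coeff_bounded F B \<Longrightarrow> B \<ge> 0 \<Longrightarrow> coeff_bounded (F ^ k) (B ^ k)"
  by (induct k) (simp_all add: coeff_bounded_one coeff_bounded_mult)

lemma coeff_bounded_sum:
  assumes "finite S" "B \<ge> 0" "\<And>i. i \<in> S \<Longrightarrow> coeff_bounded (F i) B"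
  shows "coeff_bounded (\<Sum>i\<in>S. F i) B"
  using assms theta_pos
  by (intro coeff_boundedI) (auto simp: fps_sum_nth intro!: nrm_sum_le coeff_boundedD)

lemma nrm_exp_coeff_le: "nrm c \<le> 1 \<Longrightarrow> nrm (c ^ i / of_nat (fact i)) \<le> 1 / theta ^ i"
  using nrm_fact_ge[of i] theta_pos
  by (auto simp: nrm_divide power_le_one intro!: frac_le)

lemma coeff_bounded_exp_term:
  assumes "nrm c \<le> 1" "coeff_bounded F (theta ^ i)"
  shows "coeff_bounded (fps_const (c ^ i / of_nat (fact i)) * F) 1"
proof (rule coeff_boundedI)
  fix j
  have "nrm ((fps_const (c ^ i / of_nat (fact i)) * F) $ j)
      \<le> (1 / theta ^ i) * (theta ^ i / theta ^ j)"
    unfolding fps_mult_left_const_nth nrm_mult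
    using assms theta_pos by (intro mult_mono nrm_exp_coeff_le coeff_boundedD) auto
  thus "nrm ((fps_const (c ^ i / of_nat (fact i)) * F) $ j) \<le> 1 / theta ^ j"
    using theta_pos by simp
qed

lemma coeff_bounded_fps_ln: "coeff_bounded (fps_ln 1) theta"
proof (rule coeff_boundedI)
  fix j :: nat
  show "nrm (fps_ln 1 $ j) \<le> theta / theta ^ j"
  proof (cases j)
    case (Suc i)
    have "nrm (fps_ln 1 $ j) = 1 / nrm (of_nat j :: 'k)"
      using Suc by (simp add: fps_ln_nth nrm_divide)
    also have "\<dots> \<le> 1 / theta ^ i"
      using nrm_of_nat_ge[of j] theta_pos Suc by (intro frac_le) auto
    finally show ?thesis
      using Suc theta_pos by simp
  qed (use theta_pos in simp)
qed

lemma coeff_bounded_fps_cpow: "nrm c \<le> 1 \<Longrightarrow> coeff_bounded (fps_cpow c) 1"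
proof (rule coeff_boundedI)
  fix j
  assume "nrm c \<le> 1"
  hence "coeff_bounded (\<Sum>i=0..j. fps_const (c ^ i / of_nat (fact i)) * fps_ln 1 ^ i) 1"
    by (intro coeff_bounded_sum coeff_bounded_exp_term coeff_bounded_power coeff_bounded_fps_ln)
      (use theta_pos in auto)
  thus "nrm (fps_cpow c $ j) \<le> 1 / theta ^ j"
    using coeff_boundedD by (fastforce simp: fps_cpow_nth fps_sum_nth)
qed

end

section \<open>Evaluating power series on the disc \<open>|z| \<le> theta\<^sup>2\<close>\<close>

lemma poly_eq_sum_lessThan:
  fixes x :: "'a::comm_ring_1"
  assumes "degree p < M"
  shows "poly p x = (\<Sum>j<M. coeff p j * x ^ j)"
proof -
  have "poly p x = (\<Sum>j\<le>degree p. coeff p j * x ^ j)"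
    by (rule poly_altdef)
  also have "\<dots> = (\<Sum>j<M. coeff p j * x ^ j)"
    using assms by (intro sum.mono_neutral_left) (auto simp: coeff_eq_0)
  finally show ?thesis .
qed

context abs5
begin

definition fps_Ksums :: "'k fps \<Rightarrow> 'k \<Rightarrow> 'k \<Rightarrow> bool" where
  "fps_Ksums F z v \<longleftrightarrow> Ksums nrm (\<lambda>j. F $ j * z ^ j) v"

lemma nrm_coeff_mult_power_le:
  assumes "coeff_bounded G 1" "nrm z \<le> theta ^ 2"
  shows "nrm (G $ j * z ^ j) \<le> theta ^ j"
proof -
  have "nrm (G $ j * z ^ j) \<le> (1 / theta ^ j) * (theta ^ 2) ^ j"
    unfolding nrm_mult nrm_power using assms theta_pos
    by (intro mult_mono power_mono coeff_boundedD) auto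
  also have "\<dots> = theta ^ j"
    using theta_pos by (simp add: power2_eq_square power_mult_distrib)
  finally show ?thesis .
qed

lemma fps_Ksums_fps_of_poly: "fps_Ksums (fps_of_poly p) z (poly p z)"
  unfolding fps_Ksums_def Ksums_def
  by (rule Kconv_eventually_const, rule eventually_sequentiallyI[of "Suc (degree p)"])
    (simp add: poly_eq_sum_lessThan[of p, symmetric])

lemma nrm_Cauchy_product_diff_le:
  assumes G: "coeff_bounded G 1" and H: "coeff_bounded H 1" and z: "nrm z \<le> theta ^ 2"
  shows "nrm ((\<Sum>j<N. G $ j * z ^ j) * (\<Sum>j<N. H $ j * z ^ j) - (\<Sum>j<N. (G * H) $ j * z ^ j))
    \<le> theta ^ N"
proof -
  define f where "f = (\<lambda>(i, k). (G $ i * z ^ i) * (H $ k * z ^ k))"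
  have square: "(\<Sum>j<N. G $ j * z ^ j) * (\<Sum>j<N. H $ j * z ^ j) = sum f ({..<N} \<times> {..<N})"
    unfolding f_def sum_product sum.cartesian_product[symmetric] by simp
  have triangle: "(\<Sum>j<N. (G * H) $ j * z ^ j) = sum f {(i, k). i + k < N}"
  proof -
    have "sum f {(i, k). i + k < N} = (\<Sum>n<N. \<Sum>i\<le>n. G $ i * z ^ i * (H $ (n - i) * z ^ (n - i)))"
      unfolding f_def by (rule sum.triangle_reindex)
    also have "\<dots> = (\<Sum>n<N. \<Sum>i\<le>n. G $ i * H $ (n - i) * z ^ n)"
      by (intro sum.cong refl) (simp add: mult_ac flip: power_add)
    also have "\<dots> = (\<Sum>n<N. (G * H) $ n * z ^ n)"
      by (simp add: fps_mult_nth sum_distrib_right atLeast0AtMost)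
    finally show ?thesis by simp
  qed
  have "sum f ({..<N} \<times> {..<N}) - sum f {(i, k). i + k < N}
      = sum f ({..<N} \<times> {..<N} - {(i, k). i + k < N})"
    by (subst sum.subset_diff[of "{(i, k). i + k < N}"]) auto
  also have "nrm \<dots> \<le> theta ^ N"
  proof (rule nrm_sum_le)
    fix p
    assume p: "p \<in> {..<N} \<times> {..<N} - {(i, k). i + k < N}"
    then obtain i k where ik: "p = (i, k)" "N \<le> i + k"
      by auto
    have "nrm (f p) = nrm (G $ i * z ^ i) * nrm (H $ k * z ^ k)"
      unfolding ik f_def by (simp add: nrm_mult)
    also have "\<dots> \<le> theta ^ i * theta ^ k"
      using theta_pos by (intro mult_mono nrm_coeff_mult_power_le G H z) auto
    also have "\<dots> \<le> theta ^ N"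
      using ik by (simp add: theta_pow_antimono flip: power_add)
    finally show "nrm (f p) \<le> theta ^ N" .
  qed (use theta_pos in auto)
  finally show ?thesis
    unfolding square triangle .
qed

lemma fps_Ksums_mult:
  assumes "coeff_bounded G 1" "coeff_bounded H 1" "nrm z \<le> theta ^ 2"
    and "fps_Ksums G z a" "fps_Ksums H z b"
  shows "fps_Ksums (G * H) z (a * b)"
proof -
  have "Kconv nrm (\<lambda>N. (\<Sum>j<N. G $ j * z ^ j) * (\<Sum>j<N. H $ j * z ^ j)) (a * b)"
    using assms(4,5) unfolding fps_Ksums_def Ksums_def by (rule Kconv_mult)
  moreover have "(\<lambda>N. nrm ((\<Sum>j<N. (G * H) $ j * z ^ j)
      - (\<Sum>j<N. G $ j * z ^ j) * (\<Sum>j<N. H $ j * z ^ j))) \<longlonglongrightarrow> 0"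
    using nrm_Cauchy_product_diff_le[OF assms(1-3)] nrm_diff_commute
    by (intro real_tendsto_sandwich[OF _ _ tendsto_const theta_pow_tendsto_0]) auto
  ultimately show ?thesis
    unfolding fps_Ksums_def Ksums_def by (rule Kconv_cong_tendsto)
qed

end

context abs5
begin

lemma nrm_exp_term_le: "nrm w \<le> theta ^ 2 \<Longrightarrow> nrm (w ^ k / fact k) \<le> theta ^ k"
proof -
  assume "nrm w \<le> theta ^ 2"
  hence "nrm (w ^ k / fact k) \<le> (theta ^ 2) ^ k / theta ^ k"
    unfolding nrm_divide nrm_power using nrm_fact_ge theta_pos
    by (intro frac_le power_mono) auto
  also have "\<dots> = theta ^ k"
    using theta_pos by (simp add: power2_eq_square power_mult_distrib)
  finally show ?thesis .
qed

lemma nrm_power_diff_le: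
  assumes "nrm x \<le> r" "nrm y \<le> r"
  shows "nrm (x ^ Suc k - y ^ Suc k) \<le> nrm (x - y) * r ^ k"
proof (induct k)
  case (Suc k)
  have "x ^ Suc (Suc k) - y ^ Suc (Suc k) = x * (x ^ Suc k - y ^ Suc k) + (x - y) * y ^ Suc k"
    by (simp add: algebra_simps)
  moreover have "nrm (x * (x ^ Suc k - y ^ Suc k)) \<le> r * (nrm (x - y) * r ^ k)"
    unfolding nrm_mult using Suc assms order_trans[OF nrm_nonneg assms(1)] by (intro mult_mono) auto
  moreover have "nrm ((x - y) * y ^ Suc k) \<le> nrm (x - y) * r ^ Suc k"
    unfolding nrm_mult nrm_power using assms by (intro mult_left_mono power_mono) auto
  ultimately show ?case
    by (metis nrm_add_le mult.left_commute power_Suc)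
qed simp

lemma nrm_exp_term_diff_le:
  assumes "nrm w \<le> theta ^ 2" "nrm v \<le> theta ^ 2"
  shows "nrm (w ^ k / fact k - v ^ k / fact k) \<le> nrm (w - v) / theta"
proof (cases k)
  case (Suc i)
  have "nrm (w ^ k / fact k - v ^ k / fact k) = nrm (w ^ k - v ^ k) / nrm (fact k :: 'k)"
    by (simp add: nrm_divide flip: diff_divide_distrib)
  also have "\<dots> \<le> nrm (w - v) * (theta ^ 2) ^ i / theta ^ k"
    unfolding Suc using nrm_power_diff_le[OF assms] nrm_fact_ge[of "Suc i"] theta_pos
    by (intro frac_le) (auto simp del: fact_Suc)
  also have "\<dots> = nrm (w - v) * theta ^ i / theta"
    using theta_pos Suc by (simp add: power2_eq_square power_mult_distrib)
  also have "\<dots> \<le> nrm (w - v) / theta"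
    using theta_pos theta_pow_antimono[of 0 i]
    by (intro divide_right_mono mult_left_le) auto
  finally show ?thesis .
qed (use theta_pos in simp)

lemma nrm_exp_partial_diff_le:
  assumes "nrm w \<le> theta ^ 2" "nrm v \<le> theta ^ 2"
  shows "nrm ((\<Sum>k<N. w ^ k / fact k) - (\<Sum>k<N. v ^ k / fact k)) \<le> nrm (w - v) / theta"
  unfolding sum_subtractf[symmetric] using theta_pos
  by (intro nrm_sum_le nrm_exp_term_diff_le assms) auto

lemma nrm_log_term_le:
  assumes "nrm (y - 1) \<le> theta ^ 2"
  shows "nrm (log_term y m) \<le> theta ^ (m + 2)"
proof -
  have "nrm (log_term y m) = nrm (y - 1) ^ Suc m / nrm (of_nat (Suc m) :: 'k)"
    unfolding log_term_def by (simp add: nrm_divide nrm_mult del: of_nat_Suc)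
  also have "\<dots> \<le> (theta ^ 2) ^ Suc m / theta ^ m"
    using assms nrm_of_nat_ge[of "Suc m"] theta_pos by (intro frac_le power_mono) auto
  also have "\<dots> = theta ^ (m + 2)"
    using theta_pos by (simp add: power2_eq_square power_mult_distrib power_add)
  finally show ?thesis .
qed

lemma nrm_log_partial_le:
  "nrm (y - 1) \<le> theta ^ 2 \<Longrightarrow> nrm (\<Sum>m<N. log_term y m) \<le> theta ^ 2"
  using nrm_log_term_le theta_pow_antimono[of 2 "_ + 2"] theta_pos
  by (intro nrm_sum_le) (auto intro: order_trans)

end

lemma sum_exp_terms_diff_eq_sinh:
  "(\<Sum>k<2 * M. w ^ k / fact k) - (\<Sum>k<2 * M. (- w) ^ k / fact k) = 2 * (\<Sum>m<M. sinh_term w m)"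
proof (induct M)
  case (Suc M)
  have "2 * Suc M = Suc (Suc (2 * M))"
    by simp
  moreover have "(- w) ^ (2 * M) = w ^ (2 * M)" "(- w) ^ Suc (2 * M) = - (w ^ Suc (2 * M))"
    by (simp_all add: power_mult)
  ultimately show ?case
    using Suc by (simp add: sinh_term_def algebra_simps)
qed simp

lemma (in nonarch_abs) sinh_term_Ksums:
  assumes "Ksums nrm (\<lambda>k. w ^ k / fact k) e1" "Ksums nrm (\<lambda>k. (- w) ^ k / fact k) e2"
  shows "Ksums nrm (sinh_term w) ((e1 - e2) / 2)"
proof -
  have "strict_mono (\<lambda>M::nat. 2 * M)"
    by (rule strict_monoI) simp
  hence "Kconv nrm (\<lambda>M. (\<Sum>k<2 * M. w ^ k / fact k) - (\<Sum>k<2 * M. (- w) ^ k / fact k))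
      (e1 - e2)"
    using assms unfolding Ksums_def by (intro Kconv_diff Kconv_subseq[where r = "\<lambda>M. 2 * M"])
  hence "Kconv nrm (\<lambda>M. ((\<Sum>k<2 * M. w ^ k / fact k) - (\<Sum>k<2 * M. (- w) ^ k / fact k)) * (1 / 2))
      ((e1 - e2) * (1 / 2))"
    using Kconv_const by (rule Kconv_mult)
  thus ?thesis
    unfolding Ksums_def sum_exp_terms_diff_eq_sinh by simp
qed

section \<open>\<open>exp (c log y)\<close> is the binomial series \<open>(1 + (y - 1))\<^sup>c\<close>\<close>

text \<open>\<open>log_poly N\<close> is \<open>ln (1 + X)\<close> truncated at degree \<open>N\<close>; substituting it into the truncated
  exponential gives a polynomial whose first \<open>N\<close> coefficients are those of \<open>fps_cpow c\<close>.\<close>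

definition log_poly :: "nat \<Rightarrow> 'a::field_char_0 poly" where
  "log_poly N = (\<Sum>m<N. monom (fps_ln 1 $ Suc m) (Suc m))"

definition exp_log_poly :: "'a::field_char_0 \<Rightarrow> nat \<Rightarrow> 'a poly" where
  "exp_log_poly c N = (\<Sum>k<N. smult (c ^ k / of_nat (fact k)) (log_poly N ^ k))"

lemma poly_log_poly: "poly (log_poly N) (y - 1) = (\<Sum>m<N. log_term y m)"
  unfolding log_poly_def poly_sum
  by (intro sum.cong refl) (simp add: poly_monom log_term_def fps_ln_nth power_add del: of_nat_Suc)

lemma coeff_log_poly:
  "coeff (log_poly N :: 'a::field_char_0 poly) i = (if i \<le> N then fps_ln 1 $ i else 0)"
proof (cases i)
  case (Suc i')
  have "coeff (log_poly N :: 'a poly) (Suc i') = (\<Sum>m<N. if m = i' then fps_ln 1 $ Suc m else 0)"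
    unfolding log_poly_def coeff_sum by (intro sum.cong refl) auto
  also have "\<dots> = (if i' < N then fps_ln 1 $ Suc i' else 0)"
    by simp
  finally show ?thesis
    using Suc by (simp add: Suc_le_eq)
qed (simp add: log_poly_def coeff_sum)

lemma fps_power_nth_eq:
  assumes "\<And>i. i \<le> N \<Longrightarrow> F $ i = H $ i" "j \<le> N"
  shows "(F ^ k) $ j = (H ^ k) $ j"
  using assms(2)
proof (induct k arbitrary: j)
  case (Suc k)
  thus ?case
    using assms(1) by (simp add: fps_mult_nth)
qed simp

lemma poly_exp_log_poly:
  "poly (exp_log_poly c N) (y - 1) = (\<Sum>k<N. (c * (\<Sum>m<N. log_term y m)) ^ k / fact k)"
  unfolding exp_log_poly_def poly_sum poly_smult poly_power poly_log_poly
  by (simp add: power_mult_distrib)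

lemma fps_of_exp_log_poly:
  "fps_of_poly (exp_log_poly c N)
    = (\<Sum>k<N. fps_const (c ^ k / of_nat (fact k)) * fps_of_poly (log_poly N) ^ k)"
  unfolding exp_log_poly_def fps_of_poly_sum fps_of_poly_smult fps_of_poly_power ..

lemma coeff_exp_log_poly:
  fixes c :: "'a::field_char_0"
  shows "j < N \<Longrightarrow> coeff (exp_log_poly c N) j = fps_cpow c $ j"
proof -
  assume "j < N"
  have "(fps_of_poly (log_poly N) ^ k) $ j = (fps_ln 1 ^ k :: 'a fps) $ j" for k
    by (rule fps_power_nth_eq[of N]) (use \<open>j < N\<close> in \<open>simp_all add: coeff_log_poly\<close>)
  hence "coeff (exp_log_poly c N) j = (\<Sum>k<N. c ^ k / of_nat (fact k) * (fps_ln 1 ^ k) $ j)"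
    unfolding fps_of_poly_nth[symmetric] fps_of_exp_log_poly fps_sum_nth by simp
  also have "\<dots> = (\<Sum>k=0..j. c ^ k / of_nat (fact k) * (fps_ln 1 ^ k :: 'a fps) $ j)"
    using \<open>j < N\<close> by (intro sum.mono_neutral_right) (auto simp: not_le fps_ln_power_nth_eq_0)
  finally show ?thesis
    by (simp add: fps_cpow_nth)
qed

context abs5
begin

lemma coeff_bounded_exp_log_poly:
  "nrm c \<le> 1 \<Longrightarrow> coeff_bounded (fps_of_poly (exp_log_poly c N)) 1"
proof -
  assume "nrm c \<le> 1"
  moreover have "coeff_bounded (fps_of_poly (log_poly N)) theta"
    using coeff_boundedD[OF coeff_bounded_fps_ln] theta_pos
    by (intro coeff_boundedI) (simp add: coeff_log_poly)
  ultimately show ?thesis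
    unfolding fps_of_exp_log_poly using theta_pos
    by (intro coeff_bounded_sum coeff_bounded_exp_term coeff_bounded_power) auto
qed

lemma nrm_poly_exp_log_poly_diff_le:
  assumes "nrm c \<le> 1" "nrm z \<le> theta ^ 2"
  shows "nrm (poly (exp_log_poly c N) z - (\<Sum>j<N. fps_cpow c $ j * z ^ j)) \<le> theta ^ N"
proof -
  define p where "p = exp_log_poly c N"
  define M where "M = N + Suc (degree p)"
  have "poly p z = (\<Sum>j<M. coeff p j * z ^ j)"
    unfolding M_def by (rule poly_eq_sum_lessThan) simp
  also have "{..<M} = {..<N} \<union> {N..<M}"
    unfolding M_def by auto
  finally have "poly p z = (\<Sum>j<N. coeff p j * z ^ j) + (\<Sum>j=N..<M. coeff p j * z ^ j)"
    by (subst (asm) sum.union_disjoint) auto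
  moreover have "(\<Sum>j<N. coeff p j * z ^ j) = (\<Sum>j<N. fps_cpow c $ j * z ^ j)"
    unfolding p_def by (intro sum.cong refl) (simp add: coeff_exp_log_poly)
  moreover have "nrm (\<Sum>j=N..<M. coeff p j * z ^ j) \<le> theta ^ N"
  proof (rule nrm_sum_le)
    fix j
    assume "j \<in> {N..<M}"
    thus "nrm (coeff p j * z ^ j) \<le> theta ^ N"
      using nrm_coeff_mult_power_le[OF coeff_bounded_exp_log_poly[OF assms(1)] assms(2), of N j]
        theta_pow_antimono[of N j] unfolding p_def by simp
  qed (use theta_pos in auto)
  ultimately show ?thesis
    unfolding p_def by simp
qed

lemma fps_Ksums_fps_cpow:
  assumes y: "nrm (y - 1) \<le> theta ^ 2" and L: "Ksums nrm (log_term y) L"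
    and c: "nrm c \<le> 1" and e: "Ksums nrm (\<lambda>k. (c * L) ^ k / fact k) e"
  shows "fps_Ksums (fps_cpow c) (y - 1) e"
proof -
  define P where "P N = (\<Sum>m<N. log_term y m)" for N
  define T where "T N = (\<Sum>j<N. fps_cpow c $ j * (y - 1) ^ j)" for N
  define E where "E N = (\<Sum>k<N. (c * L) ^ k / fact k)" for N
  have P: "nrm (P N) \<le> theta ^ 2" for N
    unfolding P_def using y by (rule nrm_log_partial_le)
  have P_L: "(\<lambda>N. nrm (L - P N)) \<longlonglongrightarrow> 0"
    using L nrm_diff_commute unfolding Ksums_def Kconv_iff_tendsto P_def by simp
  have "nrm L \<le> theta ^ 2"
    using L P unfolding Ksums_def P_def by (rule Kconv_nrm_le)
  have nrm_c_mult: "nrm x \<le> theta ^ 2 \<Longrightarrow> nrm (c * x) \<le> theta ^ 2" for x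
    using c mult_mono[OF c, of "nrm x" "theta ^ 2"] by (simp add: nrm_mult)
  have bound: "nrm (T N - E N) \<le> theta ^ N + nrm (L - P N) / theta" for N
  proof -
    let ?D = "poly (exp_log_poly c N) (y - 1)"
    have "nrm (T N - ?D) \<le> theta ^ N"
      using nrm_poly_exp_log_poly_diff_le[OF c y, of N] nrm_diff_commute unfolding T_def by simp
    moreover have "?D = (\<Sum>k<N. (c * P N) ^ k / fact k)"
      unfolding P_def by (rule poly_exp_log_poly)
    hence "nrm (?D - E N) \<le> nrm (c * P N - c * L) / theta"
      unfolding E_def using P \<open>nrm L \<le> theta ^ 2\<close>
      by (simp add: nrm_exp_partial_diff_le nrm_c_mult)
    moreover have "nrm (c * P N - c * L) / theta \<le> nrm (L - P N) / theta"
      using c nrm_diff_commute[of L] theta_pos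
      by (intro divide_right_mono) (simp_all add: nrm_mult mult_left_le_one_le flip: right_diff_distrib)
    moreover have "nrm (T N - E N) \<le> nrm (T N - ?D) + nrm (?D - E N)"
      using nrm_triangle[of "T N - ?D" "?D - E N"] by simp
    ultimately show ?thesis
      by linarith
  qed
  have "(\<lambda>N. theta ^ N + nrm (L - P N) / theta) \<longlonglongrightarrow> 0"
    using tendsto_add[OF theta_pow_tendsto_0 tendsto_divide_zero[OF P_L]] by simp
  hence "(\<lambda>N. nrm (T N - E N)) \<longlonglongrightarrow> 0"
    by (rule real_tendsto_sandwich[OF _ _ tendsto_const, rotated 2]) (use bound in auto)
  thus ?thesis
    using e unfolding fps_Ksums_def Ksums_def T_def E_def by (rule Kconv_cong_tendsto[rotated])
qed

end

section \<open>Powers as exponentials of logarithms\<close>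

locale complete_abs5 = complete_nonarch_abs nrm + abs5 nrm for nrm :: "'k::field_char_0 \<Rightarrow> real"
begin

lemma exp_Ksums_exists: "nrm w \<le> theta ^ 2 \<Longrightarrow> \<exists>e. Ksums nrm (\<lambda>k. w ^ k / fact k) e"
  by (rule Ksums_exists_if_tendsto_0,
      rule real_tendsto_sandwich[OF _ _ tendsto_const theta_pow_tendsto_0])
    (auto simp: nrm_exp_term_le)

lemma sinh_term_Ksums_exists: "nrm w \<le> theta ^ 2 \<Longrightarrow> \<exists>l. Ksums nrm (sinh_term w) l"
  using exp_Ksums_exists[of w] exp_Ksums_exists[of "- w"] sinh_term_Ksums by fastforce

lemma log_Ksums_exists: "nrm (y - 1) \<le> theta ^ 2 \<Longrightarrow> \<exists>l. Ksums nrm (log_term y) l"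
proof (rule Ksums_exists_if_tendsto_0)
  assume "nrm (y - 1) \<le> theta ^ 2"
  hence bound: "\<forall>m. nrm (log_term y m) \<le> theta ^ (m + 2)"
    using nrm_log_term_le by blast
  have lim: "(\<lambda>m. theta ^ (m + 2)) \<longlonglongrightarrow> 0"
    using LIMSEQ_ignore_initial_segment[OF theta_pow_tendsto_0, of 2] by simp
  show "(\<lambda>m. nrm (log_term y m)) \<longlonglongrightarrow> 0"
    by (rule real_tendsto_sandwich[OF always_eventually always_eventually tendsto_const lim])
      (simp_all only: bound nrm_nonneg simp_thms)
qed

lemma log5_Ksums: "nrm (y - 1) \<le> theta ^ 2 \<Longrightarrow> Ksums nrm (log_term y) (log5 nrm y)"
  using log_Ksums_exists The_Ksums unfolding log5_def by fastforce

lemma nrm_mult_log5_le: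
  assumes y: "nrm (y - 1) \<le> theta ^ 2" and c: "nrm c \<le> 1"
  shows "nrm (c * log5 nrm y) \<le> theta ^ 2"
proof -
  have "nrm (log5 nrm y) \<le> theta ^ 2"
    using log5_Ksums[OF y] nrm_log_partial_le[OF y] unfolding Ksums_def by (rule Kconv_nrm_le)
  thus ?thesis
    using c mult_mono[OF c] by (simp add: nrm_mult)
qed

lemma exp_mult_log5_Ksums:
  assumes y: "nrm (y - 1) \<le> theta ^ 2" and c: "nrm c \<le> 1"
    and v: "fps_Ksums (fps_cpow c) (y - 1) v"
  shows "Ksums nrm (\<lambda>k. (c * log5 nrm y) ^ k / fact k) v"
proof -
  obtain e where e: "Ksums nrm (\<lambda>k. (c * log5 nrm y) ^ k / fact k) e"
    using exp_Ksums_exists[OF nrm_mult_log5_le[OF y c]] by blast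
  have "e = v"
    using fps_Ksums_fps_cpow[OF y log5_Ksums[OF y] c e] v unfolding fps_Ksums_def
    by (rule Ksums_unique)
  thus ?thesis using e by simp
qed

lemma fps_Ksums_fps_cpow_of_nat:
  assumes y: "nrm (y - 1) \<le> theta ^ 2"
  shows "fps_Ksums (fps_cpow (of_nat n)) (y - 1) (y ^ n)"
proof (induct n)
  case 0
  show ?case
    using fps_Ksums_fps_of_poly[of 1 "y - 1"] by simp
next
  case (Suc n)
  have "fps_Ksums (fps_of_poly [:1, 1:]) (y - 1) y"
    using fps_Ksums_fps_of_poly[of "[:1, 1:]" "y - 1"] by simp
  hence "fps_Ksums (fps_cpow 1) (y - 1) y"
    by (simp add: fps_cpow_1 fps_of_poly_pCons)
  hence "fps_Ksums (fps_cpow (of_nat n) * fps_cpow 1) (y - 1) (y ^ n * y)"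
    by (intro fps_Ksums_mult Suc y coeff_bounded_fps_cpow nrm_of_nat_le_1) simp
  thus ?case
    by (simp add: mult.commute flip: fps_cpow_add)
qed

lemma fps_Ksums_fps_cpow_minus_of_nat:
  assumes y: "nrm (y - 1) \<le> theta ^ 2"
  shows "fps_Ksums (fps_cpow (- of_nat n)) (y - 1) (inverse (y ^ n))"
proof -
  have c: "nrm (- of_nat n :: 'k) \<le> 1"
    using nrm_of_nat_le_1 by simp
  then obtain e where "Ksums nrm (\<lambda>k. (- of_nat n * log5 nrm y) ^ k / fact k) e"
    using exp_Ksums_exists[OF nrm_mult_log5_le[OF y]] by blast
  hence e: "fps_Ksums (fps_cpow (- of_nat n)) (y - 1) e"
    by (rule fps_Ksums_fps_cpow[OF y log5_Ksums[OF y] c])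
  have "fps_Ksums (fps_cpow (- of_nat n) * fps_cpow (of_nat n)) (y - 1) (e * y ^ n)"
    using c nrm_of_nat_le_1[of n]
    by (intro fps_Ksums_mult e fps_Ksums_fps_cpow_of_nat y coeff_bounded_fps_cpow)
  moreover have "fps_Ksums (fps_cpow (- of_nat n) * fps_cpow (of_nat n)) (y - 1) 1"
    using fps_Ksums_fps_of_poly[of 1 "y - 1"] by (simp flip: fps_cpow_add)
  ultimately have "e * y ^ n = 1"
    unfolding fps_Ksums_def by (rule Ksums_unique)
  hence "e = inverse (y ^ n)"
    by (metis inverse_unique mult.commute)
  thus ?thesis
    using e by simp
qed

lemma sinh5_of_nat_mult_log5:
  assumes y: "nrm (y - 1) \<le> theta ^ 2"
  shows "sinh5 nrm (of_nat n * log5 nrm y) = (y ^ n - inverse (y ^ n)) / 2"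
proof -
  have "Ksums nrm (\<lambda>k. (of_nat n * log5 nrm y) ^ k / fact k) (y ^ n)"
    by (rule exp_mult_log5_Ksums[OF y nrm_of_nat_le_1 fps_Ksums_fps_cpow_of_nat[OF y]])
  moreover have "Ksums nrm (\<lambda>k. (- (of_nat n * log5 nrm y)) ^ k / fact k) (inverse (y ^ n))"
    using exp_mult_log5_Ksums[OF y _ fps_Ksums_fps_cpow_minus_of_nat[OF y]] nrm_of_nat_le_1
    by simp
  ultimately show ?thesis
    unfolding sinh5_def by (intro The_Ksums sinh_term_Ksums)
qed

end

section \<open>The fourth root of unity \<open>\<omega>(3)\<close>\<close>

lemma pow5_dvd_power_5_diff:
  fixes a b :: int
  assumes "5 ^ Suc j dvd a - b"
  shows "5 ^ Suc (Suc j) dvd a ^ 5 - b ^ 5"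
proof -
  obtain e where "a = b + 5 * (5 ^ j * e)"
    using assms by (auto simp: dvd_def algebra_simps)
  hence "a ^ 5 - b ^ 5 = 5 ^ Suc (Suc j) * (e * (b ^ 4 + 10 * b ^ 3 * (5 ^ j * e)
      + 50 * b ^ 2 * (5 ^ j * e) ^ 2 + 125 * b * (5 ^ j * e) ^ 3 + 125 * (5 ^ j * e) ^ 4))"
    by (simp add: algebra_simps power2_eq_square power3_eq_cube power4_eq_xxxx numeral_eq_Suc)
  thus ?thesis by simp
qed

lemma pow5_dvd_3_power_diff: "(5::int) ^ Suc n dvd 3 ^ 5 ^ Suc n - 3 ^ 5 ^ n"
proof (induct n)
  case (Suc n)
  have "(3::int) ^ 5 ^ Suc m = (3 ^ 5 ^ m) ^ 5" for m
    by (simp add: power_mult[symmetric] mult.commute)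
  thus ?case
    using pow5_dvd_power_5_diff[OF Suc] by metis
qed simp

context abs5
begin

lemma root4_near_3_sq:
  assumes "w ^ 4 = 1" "nrm (w - 3) < 1"
  shows "w ^ 2 = -1"
proof -
  have "nrm (w - 1) = 1" "nrm (w + 1) = 1"
    using nrm_add_eq_left[of "w - 3" 2] nrm_add_eq_left[of "w - 3" 4] assms(2)
    by (simp_all add: algebra_simps)
  moreover have "(w - 1) * (w + 1) * (w ^ 2 + 1) = w ^ 4 - 1"
    by (simp add: algebra_simps power2_eq_square power4_eq_xxxx)
  ultimately have "nrm (w ^ 2 + 1) = nrm (w ^ 4 - 1)"
    by (metis nrm_mult mult_1)
  thus ?thesis
    using assms(1) by (simp add: eq_neg_iff_add_eq_0)
qed

lemma root4_near_3_unique: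
  assumes "w ^ 4 = 1" "nrm (w - 3) < 1" "v ^ 4 = 1" "nrm (v - 3) < 1"
  shows "w = v"
proof -
  have "(w - v) * (w + v) = w ^ 2 - v ^ 2"
    by (simp add: algebra_simps power2_eq_square)
  hence "(w - v) * (w + v) = 0"
    using root4_near_3_sq[OF assms(1,2)] root4_near_3_sq[OF assms(3,4)] by simp
  moreover have "nrm ((w - 3) + (v - 3)) < 1"
    using nrm_add_le_max[of "w - 3" "v - 3"] assms(2,4) by linarith
  hence "nrm (6 + ((w - 3) + (v - 3))) = 1"
    using nrm_add_eq_left[of "(w - 3) + (v - 3)" 6] by simp
  hence "w + v \<noteq> 0"
    by (auto simp: algebra_simps)
  ultimately show ?thesis by simp
qed

end

context complete_abs5
begin

text \<open>\<open>\<omega>(3)\<close> is the 5-adic limit of \<open>3 ^ 5 ^ n\<close>.\<close>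

lemma root4_near_3_exists: "\<exists>w. w ^ 4 = 1 \<and> nrm (w - 3) < 1"
proof -
  define s :: "nat \<Rightarrow> 'k" where "s n = 3 ^ 5 ^ n" for n
  have step: "nrm (s (Suc n) - s n) \<le> (1/5) ^ Suc n" for n
    using nrm_of_int_le_if_pow5_dvd[OF pow5_dvd_3_power_diff[of n]] unfolding s_def by simp
  have step_lim: "(\<lambda>n. (1/5::real) ^ Suc n) \<longlonglongrightarrow> 0"
    by (rule LIMSEQ_Suc[OF LIMSEQ_power_zero]) simp
  hence "(\<lambda>n. nrm (s (Suc n) - s n)) \<longlonglongrightarrow> 0"
    using step by (intro real_tendsto_sandwich[OF _ _ tendsto_const step_lim]) auto
  then obtain w where w: "Kconv nrm s w"
    using Kconv_exists_if_steps_tendsto_0 by blast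
  have "nrm (s n ^ 4 - 1) = nrm (s (Suc n) - s n)" for n
  proof -
    have "s (Suc n) = s n ^ 5"
      unfolding s_def by (simp add: power_mult[symmetric] mult.commute)
    hence "s (Suc n) - s n = s n * (s n ^ 4 - 1)"
      by (simp add: algebra_simps numeral_eq_Suc)
    thus ?thesis
      unfolding s_def by (simp add: nrm_mult)
  qed
  hence "Kconv nrm (\<lambda>n. s n ^ 4) 1"
    using step step_lim by (intro Kconv_by_bound[OF always_eventually step_lim]) simp
  moreover have "Kconv nrm (\<lambda>n. s n ^ 4) (w ^ 4)"
    using w by (rule Kconv_power)
  ultimately have "w ^ 4 = 1"
    by (rule Kconv_unique[symmetric])
  have "nrm (s n - s 0) \<le> 1/5" for n
  proof (rule nrm_telescope_le)
    fix i
    show "nrm (s (Suc i) - s i) \<le> 1/5"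
      using step[of i] power_decreasing[of 1 "Suc i" "1/5::real"] by simp
  qed simp_all
  hence "nrm (w - 3) \<le> 1/5"
    using Kconv_nrm_le[OF Kconv_diff[OF w Kconv_const, of 3], of "1/5"] unfolding s_def by simp
  with \<open>w ^ 4 = 1\<close> show ?thesis
    by (intro exI[of _ w]) simp
qed

lemma omega3: "omega3 nrm ^ 4 = 1" "nrm (omega3 nrm - 3) < 1"
proof -
  have "\<exists>!w. w ^ 4 = 1 \<and> nrm (w - 3) < 1"
    using root4_near_3_exists root4_near_3_unique by blast
  from theI'[OF this] show "omega3 nrm ^ 4 = 1" "nrm (omega3 nrm - 3) < 1"
    unfolding omega3_def by simp_all
qed

lemma omega3_sq: "omega3 nrm ^ 2 = -1"
  using root4_near_3_sq omega3 by blast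

lemma nrm_omega3: "nrm (omega3 nrm) = 1"
  using nrm_add_eq_left[of "omega3 nrm - 3" 3] omega3 by simp

lemma nrm_omega3_diff_3: "nrm (omega3 nrm - 3) = 1/5"
proof -
  let ?w = "omega3 nrm"
  have "nrm (?w + 3) = 1"
    using nrm_add_eq_left[of "?w - 3" 6] omega3 by (simp add: algebra_simps)
  moreover have "(?w - 3) * (?w + 3) = - (2 * 5)"
    using omega3_sq by (simp add: algebra_simps power2_eq_square)
  hence "nrm (?w - 3) * nrm (?w + 3) = 1/5"
    by (metis nrm_mult nrm_minus nrm_2 nrm_5 mult_1)
  ultimately show ?thesis by simp
qed

end

section \<open>The golden ratio\<close>

lemma golden_sqrt5_sq:
  fixes phi :: "'a::comm_ring_1"
  assumes "phi ^ 2 = phi + 1"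
  shows "(2 * phi - 1) ^ 2 = 5"
proof -
  have "(2 * phi - 1) ^ 2 = 4 * phi ^ 2 - 4 * phi + 1"
    by (simp add: power2_eq_square algebra_simps)
  thus ?thesis
    using assms by simp
qed

lemma fib_mult_sqrt5:
  fixes phi :: "'a::comm_ring_1"
  assumes phi: "phi ^ 2 = phi + 1"
  shows "of_nat (fib n) * (2 * phi - 1) = phi ^ n - (1 - phi) ^ n"
proof (induct n rule: fib.induct)
  case (3 n)
  have rec: "x ^ Suc (Suc n) = x ^ Suc n + x ^ n" if "x ^ 2 = x + 1" for x :: 'a
  proof -
    have "x ^ Suc (Suc n) = x ^ n * x ^ 2"
      by (simp add: power2_eq_square algebra_simps)
    thus ?thesis
      using that by (simp add: algebra_simps)
  qed
  have "(1 - phi) ^ 2 = (1 - phi) + 1"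
    using phi by (simp add: power2_eq_square algebra_simps)
  hence q: "(1 - phi) ^ Suc (Suc n) = (1 - phi) ^ Suc n + (1 - phi) ^ n"
    by (rule rec)
  have "of_nat (fib (Suc (Suc n))) * (2 * phi - 1)
      = of_nat (fib (Suc n)) * (2 * phi - 1) + of_nat (fib n) * (2 * phi - 1)"
    by (simp add: distrib_right)
  also have "\<dots> = (phi ^ Suc n - (1 - phi) ^ Suc n) + (phi ^ n - (1 - phi) ^ n)"
    using 3 by simp
  also have "\<dots> = phi ^ Suc (Suc n) - (1 - phi) ^ Suc (Suc n)"
    unfolding rec[OF phi] q by (simp add: algebra_simps)
  finally show ?case .
qed simp_all

lemma of_nat_fib_div_power:
  fixes phi w :: "'a::field_char_0"
  assumes phi: "phi ^ 2 = phi + 1" and w: "w ^ 2 = -1"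
  shows "2 / (2 * phi - 1) * (((phi / w) ^ n - inverse ((phi / w) ^ n)) / 2)
    = of_nat (fib n) / w ^ n"
proof -
  have "2 * phi - 1 \<noteq> 0"
    using golden_sqrt5_sq[OF phi] by auto
  have "w \<noteq> 0"
    using w by auto
  have "phi / w * ((1 - phi) / w) = 1"
    using phi w \<open>w \<noteq> 0\<close> by (simp add: field_simps power2_eq_square)
  hence "inverse ((phi / w) ^ n) = ((1 - phi) / w) ^ n"
    by (metis inverse_unique power_inverse)
  hence "(phi / w) ^ n - inverse ((phi / w) ^ n) = (phi ^ n - (1 - phi) ^ n) / w ^ n"
    by (simp only: power_divide diff_divide_distrib[symmetric])
  also have "\<dots> = of_nat (fib n) * (2 * phi - 1) / w ^ n"
    by (simp only: fib_mult_sqrt5[OF phi])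
  finally have "(phi / w) ^ n - inverse ((phi / w) ^ n) = of_nat (fib n) * (2 * phi - 1) / w ^ n" .
  thus ?thesis
    using \<open>2 * phi - 1 \<noteq> 0\<close> by simp
qed

lemma (in complete_abs5) nrm_golden_div_omega3_diff_1:
  assumes phi: "phi ^ 2 = phi + 1"
  shows "nrm (phi / omega3 nrm - 1) \<le> theta ^ 2"
proof -
  let ?w = "omega3 nrm"
  have "nrm (2 * phi - 1) ^ 2 = (theta ^ 2) ^ 2"
    using arg_cong[OF golden_sqrt5_sq[OF phi], of nrm]
    by (simp add: nrm_5 theta_pow_4 flip: power_mult nrm_power)
  hence "nrm (2 * phi - 1) = theta ^ 2"
    by (rule power2_eq_imp_eq) auto
  hence "nrm ((2 * phi - 1) - 5) \<le> theta ^ 2"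
    using theta_pow_4 theta_pow_antimono[of 2 4] nrm_diff_le[of "2 * phi - 1" "theta ^ 2" 5]
    by (simp add: nrm_5)
  moreover have "nrm (2 * (3 - ?w)) = theta ^ 4"
    using nrm_omega3_diff_3 nrm_diff_commute[of ?w 3] theta_pow_4 by (simp only: nrm_mult nrm_2)
  hence "nrm (2 * (3 - ?w)) \<le> theta ^ 2"
    using theta_pow_antimono[of 2 4] by simp
  moreover have "2 * (phi - ?w) = ((2 * phi - 1) - 5) + 2 * (3 - ?w)"
    by (simp add: algebra_simps)
  ultimately have "nrm (phi - ?w) \<le> theta ^ 2"
    by (metis nrm_add_le nrm_mult nrm_2 mult_1)
  moreover have "?w \<noteq> 0"
    using nrm_omega3 by auto
  hence "phi / ?w - 1 = (phi - ?w) / ?w"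
    by (simp add: field_simps)
  ultimately show ?thesis
    by (simp add: nrm_divide nrm_omega3)
qed

lemma (in nonarch_abs) nrm_le_1_if_Z5: "x \<in> Z5 nrm \<Longrightarrow> nrm x \<le> 1"
  unfolding Z5_def using Kconv_nrm_le nrm_of_int_le_1 by blast

lemma complete_abs5_if_is_K5: "is_K5 nrm phi \<Longrightarrow> complete_abs5 nrm"
  unfolding is_K5_def by unfold_locales auto

theorem corollary5p3:
  fixes nrm :: "'k::field_char_0 \<Rightarrow> real" and phi :: 'k
  assumes K: "is_K5 nrm phi"
  defines "sqrt5 \<equiv> 2 * phi - 1"
    and "\<omega> \<equiv> omega3 nrm"
    and "L \<equiv> log5 nrm (phi / omega3 nrm)"
  shows "(\<exists>l. Ksums nrm (log_term (phi / \<omega>)) l)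
    \<and> (\<forall>x \<in> Z5 nrm. \<exists>l. Ksums nrm (sinh_term (x * L)) l)
    \<and> (\<forall>n::nat. (2 / sqrt5) * sinh5 nrm (of_nat n * L) = of_nat (fib n) / \<omega> ^ n)"
proof -
  interpret complete_abs5 nrm
    using K by (rule complete_abs5_if_is_K5)
  have phi: "phi ^ 2 = phi + 1"
    using K unfolding is_K5_def by blast
  have y: "nrm (phi / \<omega> - 1) \<le> theta ^ 2"
    unfolding \<omega>_def using phi by (rule nrm_golden_div_omega3_diff_1)
  have L: "L = log5 nrm (phi / \<omega>)"
    unfolding L_def \<omega>_def ..
  have "Ksums nrm (sinh_term (x * L)) (sinh5 nrm (x * L))" if "x \<in> Z5 nrm" for x
    using sinh_term_Ksums_exists[OF nrm_mult_log5_le[OF y nrm_le_1_if_Z5[OF that]]]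
    unfolding L sinh5_def by (metis The_Ksums)
  moreover have "(2 / sqrt5) * sinh5 nrm (of_nat n * L) = of_nat (fib n) / \<omega> ^ n" for n
  proof -
    have "sinh5 nrm (of_nat n * L) = ((phi / \<omega>) ^ n - inverse ((phi / \<omega>) ^ n)) / 2"
      unfolding L by (rule sinh5_of_nat_mult_log5[OF y])
    thus ?thesis
      unfolding sqrt5_def \<omega>_def by (simp only: of_nat_fib_div_power[OF phi omega3_sq])
  qed
  ultimately show ?thesis
    using log5_Ksums[OF y] by blast
qed

end
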